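(* Let $\mathcal{B}$ be a complete topological ring, let $\mathrm{e}\colon\mathcal{B}\to\mathcal{B}\{T\}$ be a restricted exponential homomorphism and let $s$ be a local slice for $\mathrm{e}$, with $\mathrm{e}(s)=s+s_1T$. Then the image $\sigma\in\widehat{\mathcal{B}_{s_1}}$ of the element $s_1^{-1}s\in\mathcal{B}_{s_1}$ by the separated completion homomorphism is a regular element (non-zero-divisor) of $\widehat{\mathcal{B}_{s_1}}$. Furthermore, if $\widehat{\mathcal{B}_{s_1}}$ is not the zero ring, then $\widehat{\mathrm{e}_{s_1}}(\sigma)=\sigma+T$.
   Context: Conventions: topological rings are linearly topologized with a countable fundamental system of open ideals; homomorphisms are continuous; complete means the canonical map to $\varprojlim_{\mathfrak{a}}\mathcal{B}/\mathfrak{a}$ (open ideals, discrete quotients) is a topological isomorphism. For complete $\mathcal{C}$, $\mathcal{C}\{T\}$, $\mathcal{C}\{T,T'\}$ denote restricted power series (coefficients converging to $0$), topologized by the ideals of series with all coefficients in a given open ideal. A restricted exponential homomorphism is a continuous ring homomorphism $\mathrm{e}\colon\mathcal{C}\to\mathcal{C}\{T\}$, $\mathrm{e}(c)=\sum_i\mathrm{e}_i(c)T^i$, with $\mathrm{e}_0=\mathrm{id}$ and $\sum_{i,j}\mathrm{e}_j(\mathrm{e}_i(c))T'^jT^i=\sum_\ell\mathrm{e}_\ell(c)(T+T')^\ell$ for all $c$. $\mathcal{B}^{\mathrm{e}}=\{b:\mathrm{e}(b)=b\}$. A local slice is $s\in\mathcal{B}$ with $\mathrm{e}(s)$ a polynomial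 of degree $1$ in $T$; writing $\mathrm{e}(s)=s+s_1T$ one has $s_1\in\mathcal{B}^{\mathrm{e}}$. $\widehat{\mathcal{B}_{s_1}}$ is the separated completion of the localization $\mathcal{B}_{s_1}=S^{-1}\mathcal{B}$, $S=\{s_1^n\}_{n\ge0}$, for the linear topology generated by the ideals $S^{-1}\mathfrak{b}$, $\mathfrak{b}$ open in $\mathcal{B}$; $\tilde j\colon\mathcal{B}\to\widehat{\mathcal{B}_{s_1}}$ is the canonical map and $\tilde j_T(\sum b_iT^i)=\sum\tilde j(b_i)T^i$. $\widehat{\mathrm{e}_{s_1}}\colon\widehat{\mathcal{B}_{s_1}}\to\widehat{\mathcal{B}_{s_1}}\{T\}$ is the unique restricted exponential homomorphism with $\tilde j_T\circ\mathrm{e}=\widehat{\mathrm{e}_{s_1}}\circ\tilde j$. *)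

theory Defs
  imports Main
begin

definition is_ideal :: "'a::comm_ring_1 set \<Rightarrow> bool" where
  "is_ideal I \<longleftrightarrow> 0 \<in> I \<and> (\<forall>x\<in>I. \<forall>y\<in>I. x + y \<in> I) \<and> (\<forall>x\<in>I. \<forall>r. r * x \<in> I)"

text \<open>The topology of the ring is the linear topology whose fundamental system of
  open ideals is the (decreasing) sequence b 0, b 1, ...\<close>
definition lin_top :: "(nat \<Rightarrow> 'a::comm_ring_1 set) \<Rightarrow> bool" where
  "lin_top b \<longleftrightarrow> (\<forall>m. is_ideal (b m)) \<and> (\<forall>m. b (Suc m) \<subseteq> b m)"

text \<open>Complete: the canonical map to the inverse limit of the discrete quotients
  B/b m is bijective (injective = separated, surjective = every compatible
  system of residues lifts).\<close>
definition complete_top :: "(nat \<Rightarrow> 'a::comm_ring_1 set) \<Rightarrow> bool" where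
  "complete_top b \<longleftrightarrow> lin_top b
     \<and> (\<forall>x. (\<forall>m. x \<in> b m) \<longrightarrow> x = 0)
     \<and> (\<forall>y::nat \<Rightarrow> 'a. (\<forall>m. y (Suc m) - y m \<in> b m) \<longrightarrow> (\<exists>z. \<forall>m. z - y m \<in> b m))"

text \<open>A power series is a coefficient function; restricted = coefficients tend to 0.\<close>
definition restricted :: "(nat \<Rightarrow> 'a::comm_ring_1 set) \<Rightarrow> (nat \<Rightarrow> 'a) \<Rightarrow> bool" where
  "restricted b f \<longleftrightarrow> (\<forall>m. \<exists>N. \<forall>i\<ge>N. f i \<in> b m)"

definition cauchy_prod :: "(nat \<Rightarrow> 'a::comm_ring_1) \<Rightarrow> (nat \<Rightarrow> 'a) \<Rightarrow> nat \<Rightarrow> 'a" where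
  "cauchy_prod f g i = (\<Sum>j\<le>i. f j * g (i - j))"

text \<open>e c i is the coefficient e_i(c) of T^i in e(c).  The exponential identity
  sum_{i,j} e_j(e_i c) T'^j T^i = sum_l e_l(c) (T+T')^l is written coefficientwise.\<close>
definition restr_exp_hom :: "(nat \<Rightarrow> 'a::comm_ring_1 set) \<Rightarrow> ('a \<Rightarrow> nat \<Rightarrow> 'a) \<Rightarrow> bool" where
  "restr_exp_hom b e \<longleftrightarrow>
     (\<forall>c. restricted b (e c))
   \<and> (\<forall>m. \<exists>m'. \<forall>x\<in>b m'. \<forall>i. e x i \<in> b m)
   \<and> (\<forall>x y. e (x + y) = (\<lambda>i. e x i + e y i))
   \<and> (\<forall>x y. e (x * y) = cauchy_prod (e x) (e y))
   \<and> e 1 = (\<lambda>i. if i = 0 then 1 else 0)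
   \<and> (\<forall>c. e c 0 = c)
   \<and> (\<forall>c i j. e (e c i) j = of_nat ((i + j) choose i) * e c (i + j))"

definition local_slice :: "('a::comm_ring_1 \<Rightarrow> nat \<Rightarrow> 'a) \<Rightarrow> 'a \<Rightarrow> 'a \<Rightarrow> bool" where
  "local_slice e s s1 \<longleftrightarrow> s1 \<noteq> 0 \<and> e s = (\<lambda>i. if i = 0 then s else if i = 1 then s1 else 0)"

section \<open>Localization B_{s1}: fractions (a,k) = a / s1^k\<close>

definition frac_eq :: "'a::comm_ring_1 \<Rightarrow> 'a \<times> nat \<Rightarrow> 'a \<times> nat \<Rightarrow> bool" where
  "frac_eq s1 x y \<longleftrightarrow> (\<exists>t. s1 ^ t * (s1 ^ snd y * fst x - s1 ^ snd x * fst y) = 0)"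

definition frac_add :: "'a::comm_ring_1 \<Rightarrow> 'a \<times> nat \<Rightarrow> 'a \<times> nat \<Rightarrow> 'a \<times> nat" where
  "frac_add s1 x y = (s1 ^ snd y * fst x + s1 ^ snd x * fst y, snd x + snd y)"

definition frac_diff :: "'a::comm_ring_1 \<Rightarrow> 'a \<times> nat \<Rightarrow> 'a \<times> nat \<Rightarrow> 'a \<times> nat" where
  "frac_diff s1 x y = (s1 ^ snd y * fst x - s1 ^ snd x * fst y, snd x + snd y)"

definition frac_mult :: "'a::comm_ring_1 \<times> nat \<Rightarrow> 'a \<times> nat \<Rightarrow> 'a \<times> nat" where
  "frac_mult x y = (fst x * fst y, snd x + snd y)"

text \<open>The open ideal S^{-1} I of B_{s1} (as a set of representing fractions).\<close>
definition loc_ideal :: "'a::comm_ring_1 \<Rightarrow> 'a set \<Rightarrow> ('a \<times> nat) set" where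
  "loc_ideal s1 I = {x. \<exists>c\<in>I. \<exists>l. frac_eq s1 x (c, l)}"

text \<open>An element is a sequence of fractions x m (representing a class in
  B_{s1}/S^{-1}(b m)) that is compatible with the transition maps.\<close>
definition compl_elem :: "'a::comm_ring_1 \<Rightarrow> (nat \<Rightarrow> 'a set) \<Rightarrow> (nat \<Rightarrow> 'a \<times> nat) \<Rightarrow> bool" where
  "compl_elem s1 b x \<longleftrightarrow> (\<forall>m. frac_diff s1 (x (Suc m)) (x m) \<in> loc_ideal s1 (b m))"

definition compl_eq :: "'a::comm_ring_1 \<Rightarrow> (nat \<Rightarrow> 'a set) \<Rightarrow> (nat \<Rightarrow> 'a \<times> nat) \<Rightarrow> (nat \<Rightarrow> 'a \<times> nat) \<Rightarrow> bool" where
  "compl_eq s1 b x y \<longleftrightarrow> (\<forall>m. frac_diff s1 (x m) (y m) \<in> loc_ideal s1 (b m))"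

definition compl_mult :: "(nat \<Rightarrow> 'a::comm_ring_1 \<times> nat) \<Rightarrow> (nat \<Rightarrow> 'a \<times> nat) \<Rightarrow> nat \<Rightarrow> 'a \<times> nat" where
  "compl_mult x y = (\<lambda>m. frac_mult (x m) (y m))"

definition compl_of :: "'a::comm_ring_1 \<times> nat \<Rightarrow> nat \<Rightarrow> 'a \<times> nat" where
  "compl_of q = (\<lambda>m. q)"

definition compl_zero :: "nat \<Rightarrow> 'a::comm_ring_1 \<times> nat" where
  "compl_zero = compl_of (0, 0)"

definition compl_one :: "nat \<Rightarrow> 'a::comm_ring_1 \<times> nat" where
  "compl_one = compl_of (1, 0)"

definition compl_regular :: "'a::comm_ring_1 \<Rightarrow> (nat \<Rightarrow> 'a set) \<Rightarrow> (nat \<Rightarrow> 'a \<times> nat) \<Rightarrow> bool" where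
  "compl_regular s1 b x \<longleftrightarrow>
     (\<forall>y. compl_elem s1 b y \<longrightarrow> compl_eq s1 b (compl_mult x y) compl_zero \<longrightarrow> compl_eq s1 b y compl_zero)"

text \<open>The extension of e to the completion: at level m, coefficient i of the image of x
  is e_i(a)/s1^k where a/s1^k = x m' and m' \<ge> m is such that e(b m') lies in b m{T}
  (the continuous extension of the localized homomorphism a/s1^k \<mapsto> e(a)/s1^k).\<close>
definition compl_exp :: "(nat \<Rightarrow> 'a::comm_ring_1 set) \<Rightarrow> ('a \<Rightarrow> nat \<Rightarrow> 'a) \<Rightarrow> (nat \<Rightarrow> 'a \<times> nat) \<Rightarrow> nat \<Rightarrow> nat \<Rightarrow> 'a \<times> nat" where
  "compl_exp b e x i = (\<lambda>m. let m' = (SOME m'. m \<le> m' \<and> (\<forall>z\<in>b m'. \<forall>j. e z j \<in> b m))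
                            in (e (fst (x m')) i, snd (x m')))"

end

theory Submission
  imports Defs
begin

text \<open>Multiplicativity of the exponential, together with e(s) = s + s1 T, gives
  e_(i+1)(s x) = s e_(i+1)(x) + s1 e_i(x).  Hence if s x is small enough that
  all e_j(s x) lie in an open ideal b m, then s1^i x and (-s)^i e_i(x) agree
  modulo b m for every i; as the coefficients e_i(x) tend to 0, some power of
  s1 kills x modulo b m.  In the localization at s1 this says exactly that
  multiplication by s/s1 is injective on the separated completion.  The
  identity for the extended exponential holds already levelwise, since
  e(s)/s1 = s/s1 + T.\<close>

lemma is_ideal_add: "is_ideal I \<Longrightarrow> x \<in> I \<Longrightarrow> y \<in> I \<Longrightarrow> x + y \<in> I"
  by (simp add: is_ideal_def)

lemma is_ideal_mult: "is_ideal I \<Longrightarrow> x \<in> I \<Longrightarrow> r * x \<in> I"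
  by (simp add: is_ideal_def)

lemma is_ideal_zero: "is_ideal I \<Longrightarrow> 0 \<in> I"
  by (simp add: is_ideal_def)

lemma is_ideal_diff:
  assumes "is_ideal I" "x \<in> I" "y \<in> I"
  shows "x - y \<in> I"
  using is_ideal_add[OF assms(1,2) is_ideal_mult[OF assms(1,3), of "-1"]] by simp

lemma lin_top_is_ideal: "lin_top b \<Longrightarrow> is_ideal (b m)"
  by (simp add: lin_top_def)

lemma lin_top_antimono: "lin_top b \<Longrightarrow> m \<le> M \<Longrightarrow> b M \<subseteq> b m"
  by (rule lift_Suc_antimono_le) (auto simp: lin_top_def)

lemma mem_loc_ideal_iff:
  assumes "is_ideal I"
  shows "x \<in> loc_ideal s1 I \<longleftrightarrow> (\<exists>N. s1 ^ N * fst x \<in> I)"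
proof
  assume "x \<in> loc_ideal s1 I"
  then obtain c l t where c: "c \<in> I" and eq: "s1 ^ t * (s1 ^ l * fst x - s1 ^ snd x * c) = 0"
    unfolding loc_ideal_def frac_eq_def by auto
  have "s1 ^ (t + l) * fst x = s1 ^ (t + snd x) * c"
    using eq by (simp add: power_add algebra_simps)
  moreover have "s1 ^ (t + snd x) * c \<in> I"
    using c assms is_ideal_mult by blast
  ultimately show "\<exists>N. s1 ^ N * fst x \<in> I" by metis
next
  assume "\<exists>N. s1 ^ N * fst x \<in> I"
  then obtain N where N: "s1 ^ N * fst x \<in> I" by blast
  have "frac_eq s1 x (s1 ^ N * fst x, N + snd x)"
    unfolding frac_eq_def by (rule exI[of _ 0]) (simp add: power_add algebra_simps)
  then show "x \<in> loc_ideal s1 I"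
    unfolding loc_ideal_def using N by blast
qed

lemma zero_numerator_in_loc_ideal: "is_ideal I \<Longrightarrow> fst x = 0 \<Longrightarrow> x \<in> loc_ideal s1 I"
  by (simp add: mem_loc_ideal_iff is_ideal_zero)

lemma frac_diff_loc_ideal_trans:
  assumes I: "is_ideal I"
    and xy: "frac_diff s1 x y \<in> loc_ideal s1 I"
    and yz: "frac_diff s1 y z \<in> loc_ideal s1 I"
  shows "frac_diff s1 x z \<in> loc_ideal s1 I"
proof -
  obtain N1 where N1: "s1 ^ N1 * (s1 ^ snd y * fst x - s1 ^ snd x * fst y) \<in> I"
    using xy by (auto simp: mem_loc_ideal_iff[OF I] frac_diff_def)
  obtain N2 where N2: "s1 ^ N2 * (s1 ^ snd z * fst y - s1 ^ snd y * fst z) \<in> I"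
    using yz by (auto simp: mem_loc_ideal_iff[OF I] frac_diff_def)
  have "s1 ^ (N1 + N2 + snd y) * (s1 ^ snd z * fst x - s1 ^ snd x * fst z)
      = s1 ^ (snd z + N2) * (s1 ^ N1 * (s1 ^ snd y * fst x - s1 ^ snd x * fst y))
        + s1 ^ (snd x + N1) * (s1 ^ N2 * (s1 ^ snd z * fst y - s1 ^ snd y * fst z))"
    by (simp add: power_add algebra_simps)
  also have "\<dots> \<in> I"
    using N1 N2 I is_ideal_add is_ideal_mult by blast
  finally show ?thesis
    by (auto simp: mem_loc_ideal_iff[OF I] frac_diff_def)
qed

lemma loc_ideal_frac_diff_closed:
  assumes I: "is_ideal I"
    and x: "x \<in> loc_ideal s1 I"
    and xy: "frac_diff s1 x y \<in> loc_ideal s1 I"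
  shows "y \<in> loc_ideal s1 I"
proof -
  obtain N1 where N1: "s1 ^ N1 * fst x \<in> I"
    using x by (auto simp: mem_loc_ideal_iff[OF I])
  obtain N2 where N2: "s1 ^ N2 * (s1 ^ snd y * fst x - s1 ^ snd x * fst y) \<in> I"
    using xy by (auto simp: mem_loc_ideal_iff[OF I] frac_diff_def)
  have "s1 ^ (N1 + N2 + snd x) * fst y
      = s1 ^ (N2 + snd y) * (s1 ^ N1 * fst x)
        - s1 ^ N1 * (s1 ^ N2 * (s1 ^ snd y * fst x - s1 ^ snd x * fst y))"
    by (simp add: power_add algebra_simps)
  also have "\<dots> \<in> I"
    using N1 N2 I is_ideal_diff is_ideal_mult by blast
  finally show ?thesis
    by (auto simp: mem_loc_ideal_iff[OF I])
qed

lemma compl_eq_zero_iff: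
  "compl_eq s1 b y compl_zero \<longleftrightarrow> (\<forall>m. y m \<in> loc_ideal s1 (b m))"
  by (simp add: compl_eq_def frac_diff_def compl_zero_def compl_of_def)

lemma compl_elem_level_diff:
  assumes lt: "lin_top b" and y: "compl_elem s1 b y" and "m \<le> M"
  shows "frac_diff s1 (y M) (y m) \<in> loc_ideal s1 (b m)"
  using \<open>m \<le> M\<close>
proof (induction M rule: dec_induct)
  case base
  show ?case
    by (simp add: zero_numerator_in_loc_ideal lin_top_is_ideal[OF lt] frac_diff_def)
next
  case (step M)
  have "frac_diff s1 (y (Suc M)) (y M) \<in> loc_ideal s1 (b M)"
    using y unfolding compl_elem_def by blast
  also have "loc_ideal s1 (b M) \<subseteq> loc_ideal s1 (b m)"
    using lin_top_antimono[OF lt step.hyps(1)] by (auto simp: loc_ideal_def)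
  finally show ?case
    using frac_diff_loc_ideal_trans[OF lin_top_is_ideal[OF lt]] step.IH by blast
qed

lemma restr_exp_hom_continuous:
  assumes "lin_top b" "restr_exp_hom b e"
  obtains M where "m \<le> M" "\<forall>z\<in>b M. \<forall>j. e z j \<in> b m"
proof -
  obtain m' where m': "\<forall>z\<in>b m'. \<forall>j. e z j \<in> b m"
    using assms(2) unfolding restr_exp_hom_def by blast
  have "b (max m m') \<subseteq> b m'"
    using lin_top_antimono[OF assms(1)] by simp
  with m' show thesis
    using that[of "max m m'"] by auto
qed

lemma exp_slice_mult_Suc:
  assumes re: "restr_exp_hom b e" and ls: "local_slice e s s1"
  shows "e (s * x) (Suc i) = s * e x (Suc i) + s1 * e x i"
proof -
  have es: "e s = (\<lambda>i. if i = 0 then s else if i = 1 then s1 else 0)"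
    using ls unfolding local_slice_def by blast
  have "e (s * x) (Suc i) = (\<Sum>j\<le>Suc i. e s j * e x (Suc i - j))"
    using re by (simp add: restr_exp_hom_def cauchy_prod_def)
  also have "\<dots> = (\<Sum>j\<in>{0,1}. e s j * e x (Suc i - j))"
    by (rule sum.mono_neutral_right) (auto simp: es)
  also have "\<dots> = s * e x (Suc i) + s1 * e x i"
    by (simp add: es)
  finally show ?thesis .
qed

lemma slice_power_congruence:
  assumes lt: "lin_top b" and re: "restr_exp_hom b e" and ls: "local_slice e s s1"
    and cont: "\<forall>z\<in>b M. \<forall>j. e z j \<in> b m"
    and sx: "s * x \<in> b M"
  shows "s1 ^ i * x - (- s) ^ i * e x i \<in> b m"
proof (induction i)
  case 0
  then show ?case
    using re is_ideal_zero[OF lin_top_is_ideal[OF lt]] by (simp add: restr_exp_hom_def)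
next
  case (Suc i)
  have "s * e x (Suc i) + s1 * e x i \<in> b m"
    using cont sx exp_slice_mult_Suc[OF re ls] by metis
  moreover have "s1 ^ Suc i * x - (- s) ^ Suc i * e x (Suc i)
      = s1 * (s1 ^ i * x - (- s) ^ i * e x i) + (- s) ^ i * (s * e x (Suc i) + s1 * e x i)"
    by (simp add: algebra_simps)
  ultimately show ?case
    using Suc.IH lin_top_is_ideal[OF lt] is_ideal_mult is_ideal_add by metis
qed

lemma slice_annihilated_by_power:
  assumes lt: "lin_top b" and re: "restr_exp_hom b e" and ls: "local_slice e s s1"
    and cont: "\<forall>z\<in>b M. \<forall>j. e z j \<in> b m"
    and sx: "s * x \<in> b M"
  shows "\<exists>n. s1 ^ n * x \<in> b m"
proof -
  have I: "is_ideal (b m)"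
    using lt by (rule lin_top_is_ideal)
  obtain n where "e x n \<in> b m"
    using re unfolding restr_exp_hom_def restricted_def by blast
  then have "(s1 ^ n * x - (- s) ^ n * e x n) + (- s) ^ n * e x n \<in> b m"
    using slice_power_congruence[OF assms] I is_ideal_add is_ideal_mult by blast
  then show ?thesis by auto
qed

lemma compl_regular_slice:
  assumes lt: "lin_top b" and re: "restr_exp_hom b e" and ls: "local_slice e s s1"
  shows "compl_regular s1 b (compl_of (s, 1))"
  unfolding compl_regular_def compl_eq_zero_iff
proof (intro allI impI)
  fix y m
  assume y: "compl_elem s1 b y"
    and sy: "\<forall>m. compl_mult (compl_of (s, 1)) y m \<in> loc_ideal s1 (b m)"
  have I: "\<And>m. is_ideal (b m)"
    using lt by (rule lin_top_is_ideal)
  obtain M where "m \<le> M" and cont: "\<forall>z\<in>b M. \<forall>j. e z j \<in> b m"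
    using restr_exp_hom_continuous[OF lt re] by blast
  obtain N where "s1 ^ N * (s * fst (y M)) \<in> b M"
    using sy[rule_format, of M]
    by (auto simp: mem_loc_ideal_iff[OF I] compl_mult_def compl_of_def frac_mult_def)
  then have "s * (s1 ^ N * fst (y M)) \<in> b M"
    by (simp add: algebra_simps)
  then obtain n where "s1 ^ n * (s1 ^ N * fst (y M)) \<in> b m"
    using slice_annihilated_by_power[OF lt re ls cont] by blast
  then have "y M \<in> loc_ideal s1 (b m)"
    by (auto simp: mem_loc_ideal_iff[OF I] power_add[symmetric] mult.assoc[symmetric])
  then show "y m \<in> loc_ideal s1 (b m)"
    using loc_ideal_frac_diff_closed[OF I] compl_elem_level_diff[OF lt y \<open>m \<le> M\<close>] by blast
qed

lemma compl_exp_slice: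
  assumes lt: "lin_top b" and ls: "local_slice e s s1"
  shows "compl_eq s1 b (compl_exp b e (compl_of (s, 1)) i)
           (if i = 0 then compl_of (s, 1) else if i = 1 then compl_one else compl_zero)"
  using ls zero_numerator_in_loc_ideal[OF lin_top_is_ideal[OF lt]]
  by (auto simp: compl_eq_def compl_exp_def compl_of_def compl_one_def compl_zero_def
      frac_diff_def local_slice_def Let_def algebra_simps)

theorem lemma2p14:
  fixes b :: "nat \<Rightarrow> 'a::comm_ring_1 set"
    and e :: "'a \<Rightarrow> nat \<Rightarrow> 'a"
    and s s1 :: 'a
  assumes "complete_top b"
    and "restr_exp_hom b e"
    and "local_slice e s s1"
  shows "compl_regular s1 b (compl_of (s, 1)) \<and>
         (\<not> compl_eq s1 b compl_one compl_zero \<longrightarrow>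
           (\<forall>i. compl_eq s1 b (compl_exp b e (compl_of (s, 1)) i)
                  (if i = 0 then compl_of (s, 1) else if i = 1 then compl_one else compl_zero)))"
proof -
  have lt: "lin_top b"
    using assms(1) unfolding complete_top_def by blast
  show ?thesis
    using compl_regular_slice[OF lt assms(2,3)] compl_exp_slice[OF lt assms(3)] by blast
qed

end
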